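(* As $n\to\infty$, $f_4(n)\le \frac{14}{15}(1+o(1))\binom{n}{2}$.
   Context: For $n\ge r\ge 1$, $K_n^{(r)}$ denotes the complete $r$-uniform hypergraph on $n$ vertices (all $r$-subsets of an $n$-set). A complete $r$-partite $r$-graph on a vertex set $V$ is given by pairwise disjoint nonempty sets $V_1,\dots,V_r\subseteq V$, and its edges are all $r$-sets containing exactly one vertex from each $V_i$. $f_r(n)$ is the minimum number of complete $r$-partite $r$-graphs (on the vertex set of $K_n^{(r)}$) whose edge sets partition the edge set of $K_n^{(r)}$. *)

theory Defs
  imports Complex_Main
begin

definition complete_hyp_edges :: "nat \<Rightarrow> nat \<Rightarrow> nat set set" where
  "complete_hyp_edges n r = {e. e \<subseteq> {..<n} \<and> card e = r}"

definition is_complete_partite :: "nat \<Rightarrow> nat \<Rightarrow> (nat \<Rightarrow> nat set) \<Rightarrow> bool" where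
  "is_complete_partite n r P \<longleftrightarrow>
     (\<forall>i<r. P i \<noteq> {} \<and> P i \<subseteq> {..<n}) \<and>
     (\<forall>i<r. \<forall>j<r. i \<noteq> j \<longrightarrow> P i \<inter> P j = {})"

definition partite_edges :: "nat \<Rightarrow> nat \<Rightarrow> (nat \<Rightarrow> nat set) \<Rightarrow> nat set set" where
  "partite_edges n r P = {e. e \<subseteq> {..<n} \<and> card e = r \<and> (\<forall>i<r. card (e \<inter> P i) = 1)}"

definition f :: "nat \<Rightarrow> nat \<Rightarrow> nat" where
  "f r n = (LEAST k. \<exists>G :: nat \<Rightarrow> nat \<Rightarrow> nat set.
      (\<forall>j<k. is_complete_partite n r (G j)) \<and>
      (\<forall>j<k. \<forall>j'<k. j \<noteq> j' \<longrightarrow> partite_edges n r (G j) \<inter> partite_edges n r (G j') = {}) \<and>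
      (\<Union>j<k. partite_edges n r (G j)) = complete_hyp_edges n r)"

end

theory Submission
  imports Defs
begin

text \<open>
  A complete 4-partite 4-graph is encoded by a colouring \<open>\<rho>\<close> of the vertices: its parts are
  the colour classes of the colours \<open>0, \<dots>, 3\<close> (any other value means that the vertex lies in no
  part), and its edges are the 4-sets on which \<open>\<rho>\<close> is rainbow. So it suffices to exhibit a list
  of colourings such that every 4-set is rainbow for exactly one of them.

  Cut the vertex set into blocks of four consecutive vertices. A 4-set meeting four distinct
  blocks is the blow-up of a 4-set of blocks; these are handled recursively on about \<open>n/4\<close>
  vertices, by composing the colourings for the blocks with the block map. Every other 4-set has
  two vertices in a common block, and these are partitioned by 13 colourings for each pair of
  blocks and 9 for each single block, read off from two fixed tables; that they do so only depends
  on the order type of the blocks involved and on the positions of the vertices inside their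
  blocks, and the finitely many resulting cases are checked by computation. For the number
  \<open>L(n)\<close> of colourings used, the recursion \<open>L(n) \<le> L(n/4) + 13 (n/4)\<^sup>2/2 + O(n)\<close>
  gives \<open>L(n) \<le> (13/30 + o(1)) n\<^sup>2\<close>, slightly better than the bound claimed.
\<close>

definition colour_class :: "nat \<Rightarrow> (nat \<Rightarrow> nat) \<Rightarrow> nat \<Rightarrow> nat set" where
  "colour_class n \<rho> p = {v. v < n \<and> \<rho> v = p}"

lemma rainbow_imp_inj_on:
  assumes "finite e" "card e = r" "\<rho> ` e = {..<r}"
  shows "inj_on \<rho> e"
  using assms by (intro eq_card_imp_inj_on) simp_all

lemma partite_edges_colour_class_iff:
  "e \<in> partite_edges n r (colour_class n \<rho>) \<longleftrightarrow> e \<in> complete_hyp_edges n r \<and> \<rho> ` e = {..<r}"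
proof
  assume "e \<in> partite_edges n r (colour_class n \<rho>)"
  then have sub: "e \<subseteq> {..<n}" and card_e: "card e = r"
    and one: "\<And>p. p < r \<Longrightarrow> card (e \<inter> colour_class n \<rho> p) = 1"
    unfolding partite_edges_def by auto
  have fin: "finite e" using finite_subset[OF sub] by simp
  have sub_image: "{..<r} \<subseteq> \<rho> ` e"
  proof
    fix p assume "p \<in> {..<r}"
    then have "card (e \<inter> colour_class n \<rho> p) = 1" using one by simp
    then obtain v where "e \<inter> colour_class n \<rho> p = {v}" by (rule card_1_singletonE)
    then have "v \<in> e" "\<rho> v = p" unfolding colour_class_def by auto
    then show "p \<in> \<rho> ` e" by auto
  qed
  have "card (\<rho> ` e) \<le> card {..<r}" using card_image_le[OF fin] card_e by simp
  then have "{..<r} = \<rho> ` e" by (rule card_seteq[OF finite_imageI[OF fin] sub_image])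
  then show "e \<in> complete_hyp_edges n r \<and> \<rho> ` e = {..<r}"
    using sub card_e unfolding complete_hyp_edges_def by simp
next
  assume "e \<in> complete_hyp_edges n r \<and> \<rho> ` e = {..<r}"
  then have sub: "e \<subseteq> {..<n}" and card_e: "card e = r" and rainbow: "\<rho> ` e = {..<r}"
    unfolding complete_hyp_edges_def by auto
  have inj: "inj_on \<rho> e"
    using rainbow_imp_inj_on[OF finite_subset[OF sub] card_e rainbow] by simp
  have "card (e \<inter> colour_class n \<rho> p) = 1" if "p < r" for p
  proof -
    have "p \<in> \<rho> ` e" using that rainbow by simp
    then obtain v where v: "v \<in> e" "\<rho> v = p" by blast
    have "e \<inter> colour_class n \<rho> p = {v}"
      using v sub inj_onD[OF inj] unfolding colour_class_def by blast
    then show ?thesis by simp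
  qed
  then show "e \<in> partite_edges n r (colour_class n \<rho>)"
    using sub card_e unfolding partite_edges_def by auto
qed

lemma is_complete_partite_colour_class:
  assumes "e \<subseteq> {..<n}" "\<rho> ` e = {..<r}"
  shows "is_complete_partite n r (colour_class n \<rho>)"
proof -
  have "colour_class n \<rho> p \<noteq> {}" if "p < r" for p
  proof -
    have "p \<in> \<rho> ` e" using that assms(2) by simp
    then obtain v where "v \<in> e" "\<rho> v = p" by blast
    then show ?thesis using assms(1) unfolding colour_class_def by auto
  qed
  then show ?thesis unfolding is_complete_partite_def colour_class_def by auto
qed

definition rainbow_count :: "nat \<Rightarrow> (nat \<Rightarrow> nat) list \<Rightarrow> nat set \<Rightarrow> nat" where
  "rainbow_count r L e = length (filter (\<lambda>\<rho>. \<rho> ` e = {..<r}) L)"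

lemma rainbow_count_eq_0_iff: "rainbow_count r L e = 0 \<longleftrightarrow> (\<forall>\<rho>\<in>set L. \<rho> ` e \<noteq> {..<r})"
  unfolding rainbow_count_def by (simp add: filter_empty_conv)

lemma rainbow_count_append [simp]:
  "rainbow_count r (xs @ ys) e = rainbow_count r xs e + rainbow_count r ys e"
  unfolding rainbow_count_def by simp

lemma rainbow_count_concat: "rainbow_count r (concat xss) e = (\<Sum>xs\<leftarrow>xss. rainbow_count r xs e)"
  by (induction xss) (simp_all add: rainbow_count_def)

lemma rainbow_count_map_comp: "rainbow_count r (map (\<lambda>\<rho>. \<rho> \<circ> g) L) e = rainbow_count r L (g ` e)"
  unfolding rainbow_count_def by (simp add: filter_map comp_def image_image)

lemma rainbow_count_eq_0_if_card_less:
  assumes "finite e" "card e < r"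
  shows "rainbow_count r L e = 0"
  unfolding rainbow_count_eq_0_iff
proof
  fix \<rho> :: "nat \<Rightarrow> nat"
  have "card (\<rho> ` e) < r" using card_image_le[OF assms(1), of \<rho>] assms(2) by simp
  then show "\<rho> ` e \<noteq> {..<r}" by (metis card_lessThan less_irrefl)
qed

lemma f_le_length_if_rainbow_partition:
  assumes exact: "\<And>e. e \<in> complete_hyp_edges n r \<Longrightarrow> rainbow_count r L e = 1"
    and used: "\<And>\<rho>. \<rho> \<in> set L \<Longrightarrow> \<exists>e\<in>complete_hyp_edges n r. \<rho> ` e = {..<r}"
  shows "f r n \<le> length L"
proof -
  define G where "G j = colour_class n (L ! j)" for j
  have "\<exists>j0. {j. j < length L \<and> (L ! j) ` e = {..<r}} = {j0}" if "e \<in> complete_hyp_edges n r" for e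
    using exact[OF that] unfolding rainbow_count_def length_filter_conv_card
    by (simp add: card_1_singleton_iff)
  then obtain idx where idx: "\<And>e. e \<in> complete_hyp_edges n r \<Longrightarrow>
      {j. j < length L \<and> (L ! j) ` e = {..<r}} = {idx e}"
    by metis
  have idx_iff: "j < length L \<and> (L ! j) ` e = {..<r} \<longleftrightarrow> j = idx e"
    if "e \<in> complete_hyp_edges n r" for e j
    using idx[OF that] unfolding set_eq_iff mem_Collect_eq singleton_iff by (rule spec)
  have G_iff: "e \<in> partite_edges n r (G j) \<longleftrightarrow> e \<in> complete_hyp_edges n r \<and> idx e = j"
    if "j < length L" for e j
    using idx_iff[of e j] that unfolding G_def partite_edges_colour_class_iff by blast
  have idx_less: "idx e < length L" if "e \<in> complete_hyp_edges n r" for e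
    using idx_iff[OF that, of "idx e"] by simp
  have "\<exists>G. (\<forall>j<length L. is_complete_partite n r (G j)) \<and>
      (\<forall>j<length L. \<forall>j'<length L. j \<noteq> j' \<longrightarrow> partite_edges n r (G j) \<inter> partite_edges n r (G j') = {}) \<and>
      (\<Union>j<length L. partite_edges n r (G j)) = complete_hyp_edges n r"
  proof (intro exI[of _ G] conjI allI impI)
    fix j assume "j < length L"
    then obtain e where e: "e \<in> complete_hyp_edges n r" "(L ! j) ` e = {..<r}"
      using used nth_mem by blast
    have "e \<subseteq> {..<n}" using e(1) unfolding complete_hyp_edges_def by simp
    then show "is_complete_partite n r (G j)"
      unfolding G_def by (rule is_complete_partite_colour_class[OF _ e(2)])
  next
    fix j j' assume j: "j < length L" "j' < length L" "j \<noteq> j'"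
    have "e \<notin> partite_edges n r (G j')" if "e \<in> partite_edges n r (G j)" for e
      using that G_iff[OF j(1)] G_iff[OF j(2)] j(3) by simp
    then show "partite_edges n r (G j) \<inter> partite_edges n r (G j') = {}" by blast
  next
    show "(\<Union>j<length L. partite_edges n r (G j)) = complete_hyp_edges n r"
    proof (intro equalityI subsetI)
      fix e assume "e \<in> (\<Union>j<length L. partite_edges n r (G j))"
      then obtain j where "j < length L" "e \<in> partite_edges n r (G j)" by blast
      then show "e \<in> complete_hyp_edges n r" using G_iff by simp
    next
      fix e assume e: "e \<in> complete_hyp_edges n r"
      then have "e \<in> partite_edges n r (G (idx e))" using G_iff[OF idx_less[OF e]] by simp
      then show "e \<in> (\<Union>j<length L. partite_edges n r (G j))" using idx_less[OF e] by blast
    qed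
  qed
  then show ?thesis unfolding f_def by (rule Least_le)
qed

text \<open>Colourings that are rainbow on no edge would give empty parts, so they are dropped first.\<close>

lemma f_le_length_if_rainbow_count_eq_1:
  assumes "\<And>e. e \<in> complete_hyp_edges n r \<Longrightarrow> rainbow_count r L e = 1"
  shows "f r n \<le> length L"
proof -
  define L' where "L' = filter (\<lambda>\<rho>. \<exists>e\<in>complete_hyp_edges n r. \<rho> ` e = {..<r}) L"
  have "rainbow_count r L' e = rainbow_count r L e" if "e \<in> complete_hyp_edges n r" for e
  proof -
    have "filter (\<lambda>\<rho>. \<rho> ` e = {..<r}) L' = filter (\<lambda>\<rho>. \<rho> ` e = {..<r}) L"
      unfolding L'_def filter_filter using that by (intro filter_cong) auto
    then show ?thesis unfolding rainbow_count_def by simp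
  qed
  then have "f r n \<le> length L'"
    using assms by (intro f_le_length_if_rainbow_partition) (simp_all add: L'_def)
  also have "\<dots> \<le> length L" by (simp add: L'_def)
  finally show ?thesis .
qed

abbreviation block :: "nat \<Rightarrow> nat" where
  "block v \<equiv> v div 4"

text \<open>
  A table row lists, for each region
  \<open>r\<close> (a set of blocks, as given by \<open>region\<close>) and position \<open>q\<close>, the colour \<open>row ! (4 * r + q)\<close>;
  the entry 4 puts the vertex in no part.
\<close>

definition gadget :: "nat list list \<Rightarrow> (nat \<Rightarrow> nat) \<Rightarrow> (nat \<Rightarrow> nat) list" where
  "gadget T region = map (\<lambda>row v. row ! (4 * region (block v) + v mod 4)) T"

definition is_rainbow :: "nat \<Rightarrow> nat \<Rightarrow> nat \<Rightarrow> nat \<Rightarrow> bool" where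
  "is_rainbow x y z w \<longleftrightarrow> distinct [x, y, z, w] \<and> x < 4 \<and> y < 4 \<and> z < 4 \<and> w < 4"

lemma insert4_eq_lessThan4_iff: "{x, y, z, w} = {..<4::nat} \<longleftrightarrow> is_rainbow x y z w"
proof
  assume eq: "{x, y, z, w} = {..<4::nat}"
  then have "card (set [x, y, z, w]) = length [x, y, z, w]" by simp
  then have "distinct [x, y, z, w]" by (rule card_distinct)
  moreover have "x \<in> {..<4}" "y \<in> {..<4}" "z \<in> {..<4}" "w \<in> {..<4}"
    unfolding eq[symmetric] by simp_all
  ultimately show "is_rainbow x y z w" unfolding is_rainbow_def by simp
next
  assume "is_rainbow x y z w"
  then have "distinct [x, y, z, w]" and sub: "{x, y, z, w} \<subseteq> {..<4}"
    unfolding is_rainbow_def by auto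
  then have "card {x, y, z, w} = card {..<4::nat}" using distinct_card by fastforce
  then show "{x, y, z, w} = {..<4}" using sub by (intro card_subset_eq) auto
qed

definition table_count ::
    "nat list list \<Rightarrow> nat \<Rightarrow> nat \<Rightarrow> nat \<Rightarrow> nat \<Rightarrow> nat \<Rightarrow> nat \<Rightarrow> nat \<Rightarrow> nat \<Rightarrow> nat" where
  "table_count T ra pa rb pb rc pc rd pd = length (filter (\<lambda>row.
     is_rainbow (row ! (4 * ra + pa)) (row ! (4 * rb + pb)) (row ! (4 * rc + pc)) (row ! (4 * rd + pd))) T)"

lemma rainbow_count_gadget:
  assumes "pa < 4" "pb < 4" "pc < 4" "pd < 4"
  shows "rainbow_count 4 (gadget T region) {4 * A + pa, 4 * B + pb, 4 * C + pc, 4 * D + pd} =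
    table_count T (region A) pa (region B) pb (region C) pc (region D) pd"
  using assms unfolding rainbow_count_def gadget_def table_count_def
  by (simp add: filter_map comp_def insert4_eq_lessThan4_iff)

definition has_private_colour :: "nat \<Rightarrow> nat \<Rightarrow> nat list \<Rightarrow> bool" where
  "has_private_colour R s row \<longleftrightarrow> (\<exists>p<4. \<forall>r<R. \<forall>q<4. row ! (4 * r + q) = p \<longrightarrow> r = s)"

lemma has_private_colour_iff_list_ex:
  "has_private_colour R s row \<longleftrightarrow>
    list_ex (\<lambda>p. list_all (\<lambda>r. list_all (\<lambda>q. row ! (4 * r + q) \<noteq> p \<or> r = s) [0..<4]) [0..<R]) [0..<4]"
  unfolding has_private_colour_def list_ex_iff list_all_iff by (auto simp: atLeast0LessThan)

definition single_colour_on :: "nat list \<Rightarrow> nat list \<Rightarrow> bool" where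
  "single_colour_on Out row \<longleftrightarrow> (\<forall>r\<in>set Out. \<forall>r'\<in>set Out. \<forall>q<4. \<forall>q'<4.
     row ! (4 * r + q) = 4 \<or> row ! (4 * r' + q') = 4 \<or> row ! (4 * r + q) = row ! (4 * r' + q'))"

lemma single_colour_on_iff_list_all:
  "single_colour_on Out row \<longleftrightarrow> list_all (\<lambda>r. list_all (\<lambda>r'. list_all (\<lambda>q. list_all (\<lambda>q'.
     row ! (4 * r + q) = 4 \<or> row ! (4 * r' + q') = 4 \<or> row ! (4 * r + q) = row ! (4 * r' + q'))
     [0..<4]) [0..<4]) Out) Out"
  unfolding single_colour_on_def list_all_iff by (auto simp: atLeast0LessThan)

lemma gadget_not_rainbow_if_private_colour:
  assumes "\<rho> \<in> set (gadget T region)"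
    and "\<And>b. region b < R"
    and "\<forall>row\<in>set T. has_private_colour R s row"
    and "\<forall>v\<in>e. region (block v) \<noteq> s"
  shows "\<rho> ` e \<noteq> {..<4}"
proof
  assume rainbow: "\<rho> ` e = {..<4}"
  obtain row where row: "row \<in> set T" and \<rho>: "\<rho> = (\<lambda>v. row ! (4 * region (block v) + v mod 4))"
    using assms(1) unfolding gadget_def by auto
  obtain p where "p < 4" and only: "\<forall>r<R. \<forall>q<4. row ! (4 * r + q) = p \<longrightarrow> r = s"
    using assms(3) row unfolding has_private_colour_def by blast
  then have "p \<in> \<rho> ` e" using rainbow by simp
  then obtain v where "v \<in> e" "\<rho> v = p" by blast
  then have "region (block v) = s"
    using only[rule_format, of "region (block v)" "v mod 4"] assms(2) \<rho> by simp
  with \<open>v \<in> e\<close> assms(4) show False by blast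
qed

lemma gadget_not_rainbow_if_two_outside:
  assumes "\<rho> \<in> set (gadget T region)"
    and "\<forall>row\<in>set T. single_colour_on Out row"
    and "finite e" "card e = 4" "u \<in> e" "w \<in> e" "u \<noteq> w"
    and "region (block u) \<in> set Out" "region (block w) \<in> set Out"
  shows "\<rho> ` e \<noteq> {..<4}"
proof
  assume rainbow: "\<rho> ` e = {..<4}"
  obtain row where row: "row \<in> set T" and \<rho>: "\<rho> = (\<lambda>v. row ! (4 * region (block v) + v mod 4))"
    using assms(1) unfolding gadget_def by auto
  have "single_colour_on Out row" using assms(2) row by blast
  moreover have "u mod 4 < 4" "w mod 4 < 4" by simp_all
  ultimately have "\<rho> u = 4 \<or> \<rho> w = 4 \<or> \<rho> u = \<rho> w"
    using assms(8,9) unfolding single_colour_on_def \<rho> by blast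
  moreover have "\<rho> u < 4" "\<rho> w < 4" using rainbow \<open>u \<in> e\<close> \<open>w \<in> e\<close> by auto
  ultimately have "\<rho> u = \<rho> w" by simp
  moreover have "inj_on \<rho> e" using rainbow_imp_inj_on assms(3,4) rainbow by blast
  ultimately show False using assms(5-7) by (auto dest: inj_onD)
qed

definition pair_table :: "nat list list" where
"pair_table = [
[4, 4, 4, 4, 4, 0, 1, 4, 4, 4, 4, 4, 2, 3, 2, 3, 4, 4, 4, 4],
[4, 4, 4, 4, 0, 4, 4, 1, 4, 4, 4, 4, 2, 3, 2, 3, 4, 4, 4, 4],
[4, 4, 4, 4, 0, 1, 1, 0, 4, 4, 4, 4, 2, 3, 3, 2, 4, 4, 4, 4],
[4, 4, 4, 4, 0, 1, 1, 2, 4, 4, 4, 4, 0, 1, 4, 3, 4, 4, 4, 4],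
[4, 4, 4, 4, 0, 1, 1, 2, 4, 4, 4, 4, 3, 4, 1, 2, 4, 4, 4, 4],
[4, 4, 4, 4, 0, 1, 2, 0, 4, 4, 4, 4, 4, 3, 2, 0, 4, 4, 4, 4],
[4, 4, 4, 4, 0, 1, 2, 0, 4, 4, 4, 4, 0, 1, 3, 4, 4, 4, 4, 4],
[4, 4, 4, 4, 0, 1, 1, 1, 4, 4, 4, 4, 2, 2, 2, 2, 3, 3, 3, 3],
[4, 4, 4, 4, 4, 0, 1, 1, 4, 4, 4, 4, 2, 2, 2, 2, 3, 3, 3, 3],
[4, 4, 4, 4, 4, 4, 0, 1, 4, 4, 4, 4, 2, 2, 2, 2, 3, 3, 3, 3],
[4, 4, 4, 4, 0, 0, 0, 0, 3, 3, 3, 3, 1, 2, 2, 2, 3, 3, 3, 3],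
[4, 4, 4, 4, 0, 0, 0, 0, 3, 3, 3, 3, 4, 1, 2, 2, 3, 3, 3, 3],
[4, 4, 4, 4, 0, 0, 0, 0, 3, 3, 3, 3, 4, 4, 1, 2, 3, 3, 3, 3]]"

definition block_table :: "nat list list" where
"block_table = [
[4, 4, 4, 4, 0, 1, 2, 3, 4, 4, 4, 4],
[3, 4, 3, 3, 4, 0, 1, 2, 4, 4, 4, 4],
[4, 4, 4, 4, 4, 0, 1, 2, 3, 4, 4, 3],
[4, 3, 3, 3, 0, 4, 1, 2, 4, 4, 4, 4],
[4, 4, 4, 4, 0, 4, 1, 2, 4, 3, 3, 4],
[3, 3, 3, 4, 0, 1, 4, 2, 4, 4, 4, 4],
[4, 4, 4, 4, 0, 1, 4, 2, 4, 3, 3, 4],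
[3, 3, 4, 3, 0, 1, 2, 4, 4, 4, 4, 4],
[4, 4, 4, 4, 0, 1, 2, 4, 3, 4, 4, 3]]"

definition pair_region :: "nat \<Rightarrow> nat \<Rightarrow> nat \<Rightarrow> nat" where
  "pair_region b i j = (if b < i then 0 else if b = i then 1 else if b < j then 2 else if b = j then 3 else 4)"

definition block_region :: "nat \<Rightarrow> nat \<Rightarrow> nat" where
  "block_region b i = (if b < i then 0 else if b = i then 1 else 2)"

abbreviation pair_gadget :: "nat \<Rightarrow> nat \<Rightarrow> (nat \<Rightarrow> nat) list" where
  "pair_gadget i j \<equiv> gadget pair_table (\<lambda>b. pair_region b i j)"

abbreviation block_gadget :: "nat \<Rightarrow> (nat \<Rightarrow> nat) list" where
  "block_gadget i \<equiv> gadget block_table (\<lambda>b. block_region b i)"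

lemma pair_region_less: "pair_region b i j < 5"
  by (simp add: pair_region_def)

lemma block_region_less: "block_region b i < 3"
  by (simp add: block_region_def)

lemma pair_table_colours:
  shows "\<forall>row\<in>set pair_table. has_private_colour 5 1 row"
    and "\<forall>row\<in>set pair_table. has_private_colour 5 3 row"
    and "\<forall>row\<in>set pair_table. single_colour_on [0, 2, 4] row"
proof -
  have "list_all (\<lambda>row. has_private_colour 5 1 row \<and> has_private_colour 5 3 row \<and> single_colour_on [0, 2, 4] row) pair_table"
    unfolding has_private_colour_iff_list_ex single_colour_on_iff_list_all by code_simp
  then show "\<forall>row\<in>set pair_table. has_private_colour 5 1 row"
    and "\<forall>row\<in>set pair_table. has_private_colour 5 3 row"
    and "\<forall>row\<in>set pair_table. single_colour_on [0, 2, 4] row"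
    by (simp_all add: list_all_iff)
qed

lemma block_table_colours:
  shows "\<forall>row\<in>set block_table. has_private_colour 3 1 row"
    and "\<forall>row\<in>set block_table. single_colour_on [0, 2] row"
proof -
  have "list_all (\<lambda>row. has_private_colour 3 1 row \<and> single_colour_on [0, 2] row) block_table"
    unfolding has_private_colour_iff_list_ex single_colour_on_iff_list_all by code_simp
  then show "\<forall>row\<in>set block_table. has_private_colour 3 1 row"
    and "\<forall>row\<in>set block_table. single_colour_on [0, 2] row"
    by (simp_all add: list_all_iff)
qed

definition ordered_pairs :: "nat set \<Rightarrow> (nat \<times> nat) set" where
  "ordered_pairs S = {(i, j). i < j \<and> i \<in> S \<and> j \<in> S}"

lemma ordered_pairs_singleton: "ordered_pairs {a} = {}"
  by (auto simp: ordered_pairs_def)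

lemma ordered_pairs_doubleton: "a < b \<Longrightarrow> ordered_pairs {a, b} = {(a, b)}"
  by (auto simp: ordered_pairs_def)

lemma ordered_pairs_triple: "a < b \<Longrightarrow> b < c \<Longrightarrow> ordered_pairs {a, b, c} = {(a, b), (a, c), (b, c)}"
  by (auto simp: ordered_pairs_def)

fun block_pairs :: "nat \<Rightarrow> (nat \<times> nat) list" where
  "block_pairs 0 = []"
| "block_pairs (Suc t) = block_pairs t @ map (\<lambda>i. (i, t)) [0..<t]"

lemma set_block_pairs: "set (block_pairs t) = ordered_pairs {..<t}"
  by (induction t) (auto simp: ordered_pairs_def)

lemma distinct_block_pairs: "distinct (block_pairs t)"
  by (induction t) (auto simp: set_block_pairs ordered_pairs_def distinct_map inj_on_def)

lemma length_block_pairs: "2 * length (block_pairs t) + t = t * t"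
  by (induction t) auto

definition gadgets :: "nat \<Rightarrow> (nat \<Rightarrow> nat) list" where
  "gadgets t = concat (map (\<lambda>(i, j). pair_gadget i j) (block_pairs t)) @ concat (map block_gadget [0..<t])"

lemma length_gadgets: "length (gadgets t) = 13 * length (block_pairs t) + 9 * t"
proof -
  have "length (pair_gadget i j) = 13" "length (block_gadget i) = 9" for i j
    by (simp_all add: gadget_def pair_table_def block_table_def)
  then show ?thesis
    by (simp add: gadgets_def length_concat comp_def case_prod_beta sum_list_triv)
qed

lemma rainbow_count_gadgets:
  "rainbow_count 4 (gadgets t) e =
    (\<Sum>(i, j) \<in> ordered_pairs {..<t}. rainbow_count 4 (pair_gadget i j) e) +
    (\<Sum>i<t. rainbow_count 4 (block_gadget i) e)"
  by (simp add: gadgets_def rainbow_count_concat comp_def case_prod_beta sum_list_distinct_conv_sum_set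
      distinct_block_pairs set_block_pairs atLeast0LessThan)

lemma rainbow_count_pair_gadget_eq_0_if_missed:
  assumes "i < j" "i \<notin> block ` e \<or> j \<notin> block ` e"
  shows "rainbow_count 4 (pair_gadget i j) e = 0"
proof -
  have "\<rho> ` e \<noteq> {..<4}" if \<rho>: "\<rho> \<in> set (pair_gadget i j)" for \<rho>
    using assms(2)
  proof
    assume "i \<notin> block ` e"
    then have "\<forall>v\<in>e. pair_region (block v) i j \<noteq> 1" by (auto simp: pair_region_def)
    then show ?thesis
      by (rule gadget_not_rainbow_if_private_colour[OF \<rho> pair_region_less pair_table_colours(1)])
  next
    assume "j \<notin> block ` e"
    then have "\<forall>v\<in>e. pair_region (block v) i j \<noteq> 3"
      using \<open>i < j\<close> by (auto simp: pair_region_def)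
    then show ?thesis
      by (rule gadget_not_rainbow_if_private_colour[OF \<rho> pair_region_less pair_table_colours(2)])
  qed
  then show ?thesis unfolding rainbow_count_eq_0_iff by blast
qed

lemma rainbow_count_block_gadget_eq_0_if_missed:
  assumes "i \<notin> block ` e"
  shows "rainbow_count 4 (block_gadget i) e = 0"
proof -
  have regions: "\<forall>v\<in>e. block_region (block v) i \<noteq> 1" using assms by (auto simp: block_region_def)
  have "\<rho> ` e \<noteq> {..<4}" if "\<rho> \<in> set (block_gadget i)" for \<rho>
    by (rule gadget_not_rainbow_if_private_colour[OF that block_region_less block_table_colours(1) regions])
  then show ?thesis unfolding rainbow_count_eq_0_iff by blast
qed

lemma rainbow_count_gadgets_local:
  assumes "block ` e \<subseteq> {..<t}"
  shows "rainbow_count 4 (gadgets t) e =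
    (\<Sum>(i, j) \<in> ordered_pairs (block ` e). rainbow_count 4 (pair_gadget i j) e) +
    (\<Sum>i \<in> block ` e. rainbow_count 4 (block_gadget i) e)"
proof -
  have "(\<Sum>(i, j) \<in> ordered_pairs {..<t}. rainbow_count 4 (pair_gadget i j) e) =
    (\<Sum>(i, j) \<in> ordered_pairs (block ` e). rainbow_count 4 (pair_gadget i j) e)"
  proof (rule sum.mono_neutral_right)
    show "finite (ordered_pairs {..<t})"
      by (rule finite_subset[of _ "{..<t} \<times> {..<t}"]) (auto simp: ordered_pairs_def)
    show "ordered_pairs (block ` e) \<subseteq> ordered_pairs {..<t}"
      using assms by (auto simp: ordered_pairs_def)
    show "\<forall>x\<in>ordered_pairs {..<t} - ordered_pairs (block ` e).
        (case x of (i, j) \<Rightarrow> rainbow_count 4 (pair_gadget i j) e) = 0"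
    proof
      fix x assume "x \<in> ordered_pairs {..<t} - ordered_pairs (block ` e)"
      then obtain i j where "x = (i, j)" "i < j" "i \<notin> block ` e \<or> j \<notin> block ` e"
        by (auto simp: ordered_pairs_def)
      then show "(case x of (i, j) \<Rightarrow> rainbow_count 4 (pair_gadget i j) e) = 0"
        using rainbow_count_pair_gadget_eq_0_if_missed by simp
    qed
  qed
  moreover have "(\<Sum>i<t. rainbow_count 4 (block_gadget i) e) = (\<Sum>i \<in> block ` e. rainbow_count 4 (block_gadget i) e)"
    by (rule sum.mono_neutral_right) (use assms rainbow_count_block_gadget_eq_0_if_missed in auto)
  ultimately show ?thesis by (simp add: rainbow_count_gadgets)
qed

lemma two_vertices_outside:
  assumes "finite e" "finite S" "card (g ` e) \<ge> card S + 2"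
  obtains u w where "u \<in> e" "w \<in> e" "u \<noteq> w" "g u \<notin> S" "g w \<notin> S"
proof -
  have "card (g ` e) - card S \<le> card (g ` e - S)" by (rule diff_card_le_card_Diff) (use assms in auto)
  then have "\<not> card (g ` e - S) \<le> Suc 0" using assms(3) by linarith
  then obtain x y where "x \<in> g ` e - S" "y \<in> g ` e - S" "x \<noteq> y"
    using card_le_Suc0_iff_eq[of "g ` e - S"] assms(1) by blast
  then show ?thesis using that by blast
qed

lemma rainbow_count_pair_gadget_eq_0_if_inj:
  assumes "finite e" "card e = 4" "inj_on block e" "i < j"
  shows "rainbow_count 4 (pair_gadget i j) e = 0"
proof -
  have "card {i, j} + 2 \<le> card (block ` e)" using assms by (simp add: card_image)
  then obtain u w where uw: "u \<in> e" "w \<in> e" "u \<noteq> w" and "block u \<notin> {i, j}" "block w \<notin> {i, j}"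
    by (rule two_vertices_outside[OF assms(1) finite.insertI[OF finite.insertI[OF finite.emptyI]]])
  then have "pair_region (block u) i j \<in> set [0, 2, 4]" "pair_region (block w) i j \<in> set [0, 2, 4]"
    using \<open>i < j\<close> by (auto simp: pair_region_def)
  then show ?thesis unfolding rainbow_count_eq_0_iff
    using gadget_not_rainbow_if_two_outside[OF _ pair_table_colours(3) assms(1,2) uw] by blast
qed

lemma rainbow_count_block_gadget_eq_0_if_inj:
  assumes "finite e" "card e = 4" "inj_on block e"
  shows "rainbow_count 4 (block_gadget i) e = 0"
proof -
  have "card {i} + 2 \<le> card (block ` e)" using assms by (simp add: card_image)
  then obtain u w where uw: "u \<in> e" "w \<in> e" "u \<noteq> w" and "block u \<notin> {i}" "block w \<notin> {i}"
    by (rule two_vertices_outside[OF assms(1) finite.insertI[OF finite.emptyI]])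
  then have "block_region (block u) i \<in> set [0, 2]" "block_region (block w) i \<in> set [0, 2]"
    by (auto simp: block_region_def)
  then show ?thesis unfolding rainbow_count_eq_0_iff
    using gadget_not_rainbow_if_two_outside[OF _ block_table_colours(2) assms(1,2) uw] by blast
qed

lemma rainbow_count_gadgets_if_inj:
  assumes "finite e" "card e = 4" "inj_on block e"
  shows "rainbow_count 4 (gadgets t) e = 0"
proof -
  have "(\<Sum>(i, j) \<in> ordered_pairs {..<t}. rainbow_count 4 (pair_gadget i j) e) = 0"
    using rainbow_count_pair_gadget_eq_0_if_inj[OF assms]
    by (intro sum.neutral) (auto simp: ordered_pairs_def)
  moreover have "(\<Sum>i<t. rainbow_count 4 (block_gadget i) e) = 0"
    using rainbow_count_block_gadget_eq_0_if_inj[OF assms] by simp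
  ultimately show ?thesis by (simp add: rainbow_count_gadgets)
qed

text \<open>
  The suffix lists how many of the four vertices lie in each of the blocks involved, from the
  lowest block upwards; the region arguments are those that the relevant pair and block gadgets
  assign to these blocks.
\<close>

lemma table_counts_4:
  assumes "pa < pb" "pb < pc" "pc < pd" "pd < 4"
  shows "table_count block_table 1 pa 1 pb 1 pc 1 pd = 1"
proof -
  have "list_all (\<lambda>pa. list_all (\<lambda>pb. list_all (\<lambda>pc. list_all (\<lambda>pd.
      table_count block_table 1 pa 1 pb 1 pc 1 pd = 1)
    [Suc pc..<4]) [Suc pb..<4]) [Suc pa..<4]) [0..<4]"
    by code_simp
  moreover have "pa \<in> set [0..<4]" "pb \<in> set [Suc pa..<4]" "pc \<in> set [Suc pb..<4]" "pd \<in> set [Suc pc..<4]"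
    using assms by auto
  ultimately show ?thesis unfolding list_all_iff by blast
qed

lemma table_counts_3_1:
  assumes "pa < pb" "pb < pc" "pc < 4" "pd < 4"
  shows "table_count pair_table 1 pa 1 pb 1 pc 3 pd +
    table_count block_table 1 pa 1 pb 1 pc 2 pd + table_count block_table 0 pa 0 pb 0 pc 1 pd = 1"
proof -
  have "list_all (\<lambda>pa. list_all (\<lambda>pb. list_all (\<lambda>pc. list_all (\<lambda>pd.
      table_count pair_table 1 pa 1 pb 1 pc 3 pd +
      table_count block_table 1 pa 1 pb 1 pc 2 pd + table_count block_table 0 pa 0 pb 0 pc 1 pd = 1)
    [0..<4]) [Suc pb..<4]) [Suc pa..<4]) [0..<4]"
    by code_simp
  moreover have "pa \<in> set [0..<4]" "pb \<in> set [Suc pa..<4]" "pc \<in> set [Suc pb..<4]" "pd \<in> set [0..<4]"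
    using assms by auto
  ultimately show ?thesis unfolding list_all_iff by blast
qed

lemma table_counts_1_3:
  assumes "pa < 4" "pb < pc" "pc < pd" "pd < 4"
  shows "table_count pair_table 1 pa 3 pb 3 pc 3 pd +
    table_count block_table 1 pa 2 pb 2 pc 2 pd + table_count block_table 0 pa 1 pb 1 pc 1 pd = 1"
proof -
  have "list_all (\<lambda>pa. list_all (\<lambda>pb. list_all (\<lambda>pc. list_all (\<lambda>pd.
      table_count pair_table 1 pa 3 pb 3 pc 3 pd +
      table_count block_table 1 pa 2 pb 2 pc 2 pd + table_count block_table 0 pa 1 pb 1 pc 1 pd = 1)
    [Suc pc..<4]) [Suc pb..<4]) [0..<4]) [0..<4]"
    by code_simp
  moreover have "pa \<in> set [0..<4]" "pb \<in> set [0..<4]" "pc \<in> set [Suc pb..<4]" "pd \<in> set [Suc pc..<4]"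
    using assms by auto
  ultimately show ?thesis unfolding list_all_iff by blast
qed

lemma table_counts_2_2:
  assumes "pa < pb" "pb < 4" "pc < pd" "pd < 4"
  shows "table_count pair_table 1 pa 1 pb 3 pc 3 pd +
    table_count block_table 1 pa 1 pb 2 pc 2 pd + table_count block_table 0 pa 0 pb 1 pc 1 pd = 1"
proof -
  have "list_all (\<lambda>pa. list_all (\<lambda>pb. list_all (\<lambda>pc. list_all (\<lambda>pd.
      table_count pair_table 1 pa 1 pb 3 pc 3 pd +
      table_count block_table 1 pa 1 pb 2 pc 2 pd + table_count block_table 0 pa 0 pb 1 pc 1 pd = 1)
    [Suc pc..<4]) [0..<4]) [Suc pa..<4]) [0..<4]"
    by code_simp
  moreover have "pa \<in> set [0..<4]" "pb \<in> set [Suc pa..<4]" "pc \<in> set [0..<4]" "pd \<in> set [Suc pc..<4]"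
    using assms by auto
  ultimately show ?thesis unfolding list_all_iff by blast
qed

lemma table_counts_2_1_1:
  assumes "pa < pb" "pb < 4" "pc < 4" "pd < 4"
  shows "table_count pair_table 1 pa 1 pb 3 pc 4 pd + table_count pair_table 1 pa 1 pb 2 pc 3 pd +
    table_count pair_table 0 pa 0 pb 1 pc 3 pd + table_count block_table 1 pa 1 pb 2 pc 2 pd +
    table_count block_table 0 pa 0 pb 1 pc 2 pd + table_count block_table 0 pa 0 pb 0 pc 1 pd = 1"
proof -
  have "list_all (\<lambda>pa. list_all (\<lambda>pb. list_all (\<lambda>pc. list_all (\<lambda>pd.
      table_count pair_table 1 pa 1 pb 3 pc 4 pd + table_count pair_table 1 pa 1 pb 2 pc 3 pd +
      table_count pair_table 0 pa 0 pb 1 pc 3 pd + table_count block_table 1 pa 1 pb 2 pc 2 pd +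
      table_count block_table 0 pa 0 pb 1 pc 2 pd + table_count block_table 0 pa 0 pb 0 pc 1 pd = 1)
    [0..<4]) [0..<4]) [Suc pa..<4]) [0..<4]"
    by code_simp
  moreover have "pa \<in> set [0..<4]" "pb \<in> set [Suc pa..<4]" "pc \<in> set [0..<4]" "pd \<in> set [0..<4]"
    using assms by auto
  ultimately show ?thesis unfolding list_all_iff by blast
qed

lemma table_counts_1_2_1:
  assumes "pa < 4" "pb < pc" "pc < 4" "pd < 4"
  shows "table_count pair_table 1 pa 3 pb 3 pc 4 pd + table_count pair_table 1 pa 2 pb 2 pc 3 pd +
    table_count pair_table 0 pa 1 pb 1 pc 3 pd + table_count block_table 1 pa 2 pb 2 pc 2 pd +
    table_count block_table 0 pa 1 pb 1 pc 2 pd + table_count block_table 0 pa 0 pb 0 pc 1 pd = 1"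
proof -
  have "list_all (\<lambda>pa. list_all (\<lambda>pb. list_all (\<lambda>pc. list_all (\<lambda>pd.
      table_count pair_table 1 pa 3 pb 3 pc 4 pd + table_count pair_table 1 pa 2 pb 2 pc 3 pd +
      table_count pair_table 0 pa 1 pb 1 pc 3 pd + table_count block_table 1 pa 2 pb 2 pc 2 pd +
      table_count block_table 0 pa 1 pb 1 pc 2 pd + table_count block_table 0 pa 0 pb 0 pc 1 pd = 1)
    [0..<4]) [Suc pb..<4]) [0..<4]) [0..<4]"
    by code_simp
  moreover have "pa \<in> set [0..<4]" "pb \<in> set [0..<4]" "pc \<in> set [Suc pb..<4]" "pd \<in> set [0..<4]"
    using assms by auto
  ultimately show ?thesis unfolding list_all_iff by blast
qed

lemma table_counts_1_1_2:
  assumes "pa < 4" "pb < 4" "pc < pd" "pd < 4"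
  shows "table_count pair_table 1 pa 3 pb 4 pc 4 pd + table_count pair_table 1 pa 2 pb 3 pc 3 pd +
    table_count pair_table 0 pa 1 pb 3 pc 3 pd + table_count block_table 1 pa 2 pb 2 pc 2 pd +
    table_count block_table 0 pa 1 pb 2 pc 2 pd + table_count block_table 0 pa 0 pb 1 pc 1 pd = 1"
proof -
  have "list_all (\<lambda>pa. list_all (\<lambda>pb. list_all (\<lambda>pc. list_all (\<lambda>pd.
      table_count pair_table 1 pa 3 pb 4 pc 4 pd + table_count pair_table 1 pa 2 pb 3 pc 3 pd +
      table_count pair_table 0 pa 1 pb 3 pc 3 pd + table_count block_table 1 pa 2 pb 2 pc 2 pd +
      table_count block_table 0 pa 1 pb 2 pc 2 pd + table_count block_table 0 pa 0 pb 1 pc 1 pd = 1)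
    [Suc pc..<4]) [0..<4]) [0..<4]) [0..<4]"
    by code_simp
  moreover have "pa \<in> set [0..<4]" "pb \<in> set [0..<4]" "pc \<in> set [0..<4]" "pd \<in> set [Suc pc..<4]"
    using assms by auto
  ultimately show ?thesis unfolding list_all_iff by blast
qed

lemma rainbow_count_gadgets_blocks:
  assumes "A \<le> B" "B \<le> C" "C \<le> D" "D < t" "pa < 4" "pb < 4" "pc < 4" "pd < 4"
  shows "rainbow_count 4 (gadgets t) {4 * A + pa, 4 * B + pb, 4 * C + pc, 4 * D + pd} =
    (\<Sum>(i, j) \<in> ordered_pairs {A, B, C, D}.
      table_count pair_table (pair_region A i j) pa (pair_region B i j) pb (pair_region C i j) pc (pair_region D i j) pd) +
    (\<Sum>i \<in> {A, B, C, D}.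
      table_count block_table (block_region A i) pa (block_region B i) pb (block_region C i) pc (block_region D i) pd)"
proof -
  let ?e = "{4 * A + pa, 4 * B + pb, 4 * C + pc, 4 * D + pd}"
  have blocks: "block ` ?e = {A, B, C, D}" using assms(5-8) by simp
  have pair: "rainbow_count 4 (pair_gadget i j) ?e =
      table_count pair_table (pair_region A i j) pa (pair_region B i j) pb (pair_region C i j) pc (pair_region D i j) pd"
    for i j by (rule rainbow_count_gadget[OF assms(5-8)])
  have single: "rainbow_count 4 (block_gadget i) ?e =
      table_count block_table (block_region A i) pa (block_region B i) pb (block_region C i) pc (block_region D i) pd"
    for i by (rule rainbow_count_gadget[OF assms(5-8)])
  have "block ` ?e \<subseteq> {..<t}" unfolding blocks using assms(1-4) by auto
  from rainbow_count_gadgets_local[OF this] show ?thesis unfolding blocks pair single .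
qed

lemma rainbow_count_gadgets_if_not_inj:
  assumes order: "A \<le> B" "B \<le> C" "C \<le> D" "D < t"
    and pos: "pa < 4" "pb < 4" "pc < 4" "pd < 4"
    and distinct: "A = B \<Longrightarrow> pa < pb" "B = C \<Longrightarrow> pb < pc" "C = D \<Longrightarrow> pc < pd"
    and not_inj: "A = B \<or> B = C \<or> C = D"
  shows "rainbow_count 4 (gadgets t) {4 * A + pa, 4 * B + pb, 4 * C + pc, 4 * D + pd} = 1"
proof -
  note local = rainbow_count_gadgets_blocks[OF order pos]
  note simps = pair_region_def block_region_def add.assoc order_less_imp_not_eq order_less_imp_not_eq2
    ordered_pairs_singleton ordered_pairs_doubleton ordered_pairs_triple
  have "A = B \<or> A < B" "B = C \<or> B < C" "C = D \<or> C < D" using order by auto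
  then consider (c4) "A = B" "B = C" "C = D" | (c31) "A = B" "B = C" "C < D" | (c13) "A < B" "B = C" "C = D"
    | (c22) "A = B" "B < C" "C = D" | (c211) "A = B" "B < C" "C < D" | (c121) "A < B" "B = C" "C < D"
    | (c112) "A < B" "B < C" "C = D"
    using not_inj by blast
  then show ?thesis
  proof cases
    case c4
    with local show ?thesis using table_counts_4[OF distinct(1)[OF c4(1)] distinct(2)[OF c4(2)]
        distinct(3)[OF c4(3)] pos(4)] by (simp add: simps)
  next
    case c31
    with local show ?thesis
      using table_counts_3_1[OF distinct(1)[OF c31(1)] distinct(2)[OF c31(2)] pos(3,4)] by (simp add: simps)
  next
    case c13
    with local show ?thesis
      using table_counts_1_3[OF pos(1) distinct(2)[OF c13(2)] distinct(3)[OF c13(3)] pos(4)] by (simp add: simps)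
  next
    case c22
    with local show ?thesis
      using table_counts_2_2[OF distinct(1)[OF c22(1)] pos(2) distinct(3)[OF c22(3)] pos(4)] by (simp add: simps)
  next
    case c211
    with local show ?thesis
      using table_counts_2_1_1[OF distinct(1)[OF c211(1)] pos(2-4)] by (simp add: simps)
  next
    case c121
    with local show ?thesis
      using table_counts_1_2_1[OF pos(1) distinct(2)[OF c121(2)] pos(3,4)] by (simp add: simps)
  next
    case c112
    with local show ?thesis
      using table_counts_1_1_2[OF pos(1,2) distinct(3)[OF c112(3)] pos(4)] by (simp add: simps)
  qed
qed

lemma obtain_sorted_4:
  fixes e :: "nat set"
  assumes "finite e" "card e = 4"
  obtains a b c d where "a < b" "b < c" "c < d" "e = {a, b, c, d}"
proof -
  define xs where "xs = sorted_list_of_set e"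
  have "length xs = 4" "sorted_wrt (<) xs" "set xs = e"
    using assms by (simp_all add: xs_def)
  moreover obtain a b c d where "xs = [a, b, c, d]"
    using \<open>length xs = 4\<close> by (auto simp: numeral_eq_Suc length_Suc_conv)
  ultimately show ?thesis using that by auto
qed

lemma same_block_mod_less: "a < b \<Longrightarrow> block a = block b \<Longrightarrow> a mod 4 < b mod 4"
  by (metis add_less_cancel_left div_mult_mod_eq)

lemma rainbow_count_gadgets_eq:
  assumes e: "e \<in> complete_hyp_edges n 4" and "n \<le> 4 * t"
  shows "rainbow_count 4 (gadgets t) e = (if inj_on block e then 0 else 1)"
proof -
  have sub: "e \<subseteq> {..<n}" and card_e: "card e = 4" using e unfolding complete_hyp_edges_def by auto
  have fin: "finite e" using finite_subset[OF sub] by simp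
  have blocks: "block ` e \<subseteq> {..<t}" using sub \<open>n \<le> 4 * t\<close> by auto
  show ?thesis
  proof (cases "inj_on block e")
    case True
    then show ?thesis using rainbow_count_gadgets_if_inj[OF fin card_e True] by simp
  next
    case False
    obtain a b c d where abcd: "a < b" "b < c" "c < d" and e_eq: "e = {a, b, c, d}"
      using obtain_sorted_4[OF fin card_e] by blast
    have mono: "block a \<le> block b" "block b \<le> block c" "block c \<le> block d"
      using abcd by (simp_all add: div_le_mono)
    have "block a = block b \<or> block b = block c \<or> block c = block d"
    proof (rule ccontr)
      assume "\<not> ?thesis"
      then have "block a < block b" "block b < block c" "block c < block d" using mono by auto
      then have "inj_on block e" unfolding e_eq by (auto simp: inj_on_def)
      with False show False by simp
    qed
    moreover have "block d < t" using blocks e_eq by auto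
    ultimately have "rainbow_count 4 (gadgets t)
        {4 * block a + a mod 4, 4 * block b + b mod 4, 4 * block c + c mod 4, 4 * block d + d mod 4} = 1"
      using mono abcd by (intro rainbow_count_gadgets_if_not_inj) (auto intro: same_block_mod_less)
    then show ?thesis using False unfolding e_eq by simp
  qed
qed

function rainbow_partition :: "nat \<Rightarrow> (nat \<Rightarrow> nat) list" where
  "rainbow_partition n = (if n \<le> 3 then [] else
     gadgets ((n + 3) div 4) @ map (\<lambda>\<rho>. \<rho> \<circ> block) (rainbow_partition ((n + 3) div 4)))"
  by auto
termination
  by (relation "measure id") auto

declare rainbow_partition.simps [simp del]

lemma rainbow_count_rainbow_partition:
  "e \<in> complete_hyp_edges n 4 \<Longrightarrow> rainbow_count 4 (rainbow_partition n) e = 1"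
proof (induction n arbitrary: e rule: less_induct)
  case (less n)
  have sub: "e \<subseteq> {..<n}" and card_e: "card e = 4"
    using less.prems unfolding complete_hyp_edges_def by auto
  have fin: "finite e" using finite_subset[OF sub] by simp
  have "4 \<le> n" using card_mono[OF _ sub] card_e by simp
  define t where "t = (n + 3) div 4"
  have "t < n" "n \<le> 4 * t" using \<open>4 \<le> n\<close> unfolding t_def by linarith+
  have "rainbow_count 4 (rainbow_partition n) e =
      (if inj_on block e then 0 else 1) + rainbow_count 4 (rainbow_partition t) (block ` e)"
    using \<open>4 \<le> n\<close> rainbow_count_gadgets_eq[OF less.prems \<open>n \<le> 4 * t\<close>]
    by (subst rainbow_partition.simps) (simp add: t_def rainbow_count_map_comp)
  moreover have "rainbow_count 4 (rainbow_partition t) (block ` e) = 1" if "inj_on block e"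
  proof (rule less.IH[OF \<open>t < n\<close>])
    show "block ` e \<in> complete_hyp_edges t 4"
      using that sub card_e \<open>n \<le> 4 * t\<close> by (auto simp: complete_hyp_edges_def card_image)
  qed
  moreover have "rainbow_count 4 (rainbow_partition t) (block ` e) = 0" if "\<not> inj_on block e"
  proof (rule rainbow_count_eq_0_if_card_less)
    have "card (block ` e) \<noteq> card e" using that eq_card_imp_inj_on[OF fin] by blast
    then show "card (block ` e) < 4" using card_image_le[OF fin, of block] card_e by simp
  qed (use fin in simp)
  ultimately show ?case by simp
qed

lemma length_rainbow_partition: "30 * length (rainbow_partition n) \<le> 13 * n * n + 300 * n"
proof (induction n rule: less_induct)
  case (less n)
  show ?case
  proof (cases "n \<le> 3")
    case True
    then show ?thesis by (subst rainbow_partition.simps) simp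
  next
    case False
    define t where "t = (n + 3) div 4"
    have "t < n" "4 * t \<le> n + 3" using False unfolding t_def by linarith+
    have "length (rainbow_partition n) = 13 * length (block_pairs t) + 9 * t + length (rainbow_partition t)"
      using False by (subst rainbow_partition.simps) (simp add: t_def length_gadgets)
    moreover have "30 * length (rainbow_partition t) \<le> 13 * t * t + 300 * t"
      using less.IH[OF \<open>t < n\<close>] .
    moreover have "2 * length (block_pairs t) + t = t * t" by (rule length_block_pairs)
    moreover have "16 * (t * t) \<le> n * n + 6 * n + 9"
      using mult_le_mono[OF \<open>4 * t \<le> n + 3\<close> \<open>4 * t \<le> n + 3\<close>] by (simp add: algebra_simps)
    ultimately show ?thesis using \<open>4 * t \<le> n + 3\<close> False by (simp add: algebra_simps)
  qed
qed

theorem mainTheorem1: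
  shows "\<forall>\<epsilon>::real>0. \<forall>\<^sub>F n in sequentially.
           real (f 4 n) \<le> (14 / 15) * (1 + \<epsilon>) * real (n choose 2)"
proof (intro allI impI)
  fix \<epsilon> :: real
  assume "\<epsilon> > 0"
  show "\<forall>\<^sub>F n in sequentially. real (f 4 n) \<le> (14 / 15) * (1 + \<epsilon>) * real (n choose 2)"
  proof (rule eventually_sequentiallyI[of 314])
    fix n :: nat
    assume "314 \<le> n"
    have "f 4 n \<le> length (rainbow_partition n)"
      by (rule f_le_length_if_rainbow_count_eq_1) (rule rainbow_count_rainbow_partition)
    moreover have "30 * length (rainbow_partition n) \<le> 13 * n * n + 300 * n"
      by (rule length_rainbow_partition)
    moreover have "2 * (n choose 2) + n = n * n"
      using \<open>314 \<le> n\<close> by (cases n) (simp_all add: choose_two)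
    moreover have "314 * n \<le> n * n" using \<open>314 \<le> n\<close> by simp
    ultimately have "30 * f 4 n \<le> 28 * (n choose 2)" by linarith
    then have "real (f 4 n) \<le> (14 / 15) * real (n choose 2)" by linarith
    also have "\<dots> \<le> (14 / 15) * (1 + \<epsilon>) * real (n choose 2)"
      using \<open>\<epsilon> > 0\<close> by (simp add: mult_right_mono)
    finally show "real (f 4 n) \<le> (14 / 15) * (1 + \<epsilon>) * real (n choose 2)" .
  qed
qed

end
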